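(* Let $c_0,c_1$ be convex loops with length measures $\mu_0,\mu_1$, and suppose that for some $j\in\{0,1\}$ the loop $c_j$ is degenerate with $\mu_j=r\delta_{x_j}+r\delta_{-x_j}$ ($r>0$, $x_j\in S^1$). Let $i$ be the other index and let $\{\pm\,\mathrm{i}x_j\}$ be the two antipodal points of $S^1$ orthogonal to $x_j$. Then $\mu_0,\mu_1$ are admissible if and only if $\{\pm\,\mathrm{i}x_j\}\cap\operatorname{supp}(\mu_i)=\emptyset$.
   Context: $S^1$ is the unit circle in $\mathbb{C}$ (identified with $\mathbb{R}/2\pi\mathbb{Z}$, arc-length measure $\mathrm{d}s$, geodesic distance $\operatorname{dist}$). A convex loop is $c\in W^{1,1}(S^1,\mathbb{C})$ with $c'\neq0$ a.e. whose image is the boundary of a convex set in $\mathbb{C}$, positively oriented; its length measure is $\mu_c:=(T_c)_\#(|c'|\,\mathrm{d}s)$, $T_c=c'/|c'|$. Degenerate means $\mu_c=r\delta_x+r\delta_{-x}$ for some $r>0$, $x\in S^1$. Length measures of convex loops have vanishing first moment. $\ell(\zeta)=-\log(\cos^2\zeta)$ for $\zeta\in[0,\pi/2)$, $+\infty$ for $\zeta\ge\pi/2$. $\mu_0,\mu_1\in\mathcal{M}_+(S^1)$ are admissible if $\max\big(\sup_{x\in\operatorname{supp}\mu_0}\inf_{y\in\operatorname{supp}\mu_1}\ell(\operatorname{dist}(x,y)),\sup_{y\in\operatorname{supp}\mu_1}\inf_{x\in\operatorname{supp}\mu_0}\ell(\operatorname{dist}(x,y))\big)<\infty$. *)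

theory Defs
  imports "HOL-Analysis.Analysis" "HOL-Complex_Analysis.Winding_Numbers"
begin

text \<open>S^1 is identified with the unit circle sphere 0 1 in the complex plane;
  a loop on S^1 = R/2piZ is a 2pi-periodic map c :: real => complex,
  arc-length measure ds is Lebesgue measure on [0, 2pi].\<close>

definition s1dist :: "complex \<Rightarrow> complex \<Rightarrow> real" where
  "s1dist x y = arccos (x \<bullet> y)"

definition ell :: "real \<Rightarrow> ereal" where
  "ell z = (if z < pi / 2 then ereal (- ln ((cos z)\<^sup>2)) else \<infinity>)"

definition W11_loop :: "(real \<Rightarrow> complex) \<Rightarrow> bool" where
  "W11_loop c \<longleftrightarrow> (\<forall>t. c (t + 2 * pi) = c t) \<and>
     (\<exists>g. g absolutely_integrable_on {0..2 * pi} \<and>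
          (\<forall>t\<in>{0..2 * pi}. c t = c 0 + integral {0..t} g))"

text \<open>Positively oriented: winding number 1 around every interior point of the convex set.\<close>
definition convex_loop :: "(real \<Rightarrow> complex) \<Rightarrow> bool" where
  "convex_loop c \<longleftrightarrow> W11_loop c \<and>
     (AE t in lebesgue_on {0..2 * pi}. vector_derivative c (at t) \<noteq> 0) \<and>
     (\<exists>K. convex K \<and> c ` {0..2 * pi} = frontier K \<and>
          (\<forall>z\<in>interior K. winding_number (\<lambda>s. c (2 * pi * s)) z = 1))"

text \<open>Length measure mu_c = (T_c)_# (|c'| ds), T_c = c'/|c'|, a measure on the Borel sets of C
  concentrated on the unit circle.\<close>
definition length_measure :: "(real \<Rightarrow> complex) \<Rightarrow> complex measure" where
  "length_measure c =
     distr (density (lebesgue_on {0..2 * pi}) (\<lambda>t. ennreal (norm (vector_derivative c (at t)))))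
           borel (\<lambda>t. sgn (vector_derivative c (at t)))"

definition supp :: "complex measure \<Rightarrow> complex set" where
  "supp M = {x. \<forall>e>0. emeasure M (ball x e) \<noteq> 0}"

definition admissible :: "complex measure \<Rightarrow> complex measure \<Rightarrow> bool" where
  "admissible M0 M1 \<longleftrightarrow>
     max (SUP x\<in>supp M0. INF y\<in>supp M1. ell (s1dist x y))
         (SUP y\<in>supp M1. INF x\<in>supp M0. ell (s1dist x y)) < \<infinity>"

definition is_two_dirac :: "complex measure \<Rightarrow> real \<Rightarrow> complex \<Rightarrow> bool" where
  "is_two_dirac M r x \<longleftrightarrow>
     (\<forall>A\<in>sets borel. emeasure M A = ennreal r * indicator A x + ennreal r * indicator A (- x))"

definition degenerate :: "(real \<Rightarrow> complex) \<Rightarrow> bool" where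
  "degenerate c \<longleftrightarrow> (\<exists>r>0. \<exists>x\<in>sphere 0 1. is_two_dirac (length_measure c) r x)"

end

theory Submission
  imports Defs
begin

(* The degenerate measure mu_j has support {x, -x}, and for unit vectors a, y the cost
  ell (dist a y) is finite iff a . y > 0, in which case it is -ln ((a . y)^2).  Hence the
  supremum over y in supp mu_i of the cost to the nearer of x, -x is finite iff no point of
  the compact set supp mu_i is orthogonal to x, i.e. iff +-ix are not in the support.
  The other half of admissibility asks that both x and -x have a point of supp mu_i in their
  open half-plane.  This comes from the vanishing first moment: if the closed half-plane
  {y. x . y >= 0} were mu_i-null, then x . c' < 0 almost everywhere although c' integrates
  to 0 over a period. *)

lemma has_vector_derivative_at_iff_quotient:
  "(f has_vector_derivative f') (at t) \<longleftrightarrow> ((\<lambda>h. (f (t + h) - f t) /\<^sub>R h) \<longlongrightarrow> f') (at 0)"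
proof -
  have "(f (t + h) - f t) /\<^sub>R h - f' = (f (t + h) - f t - h *\<^sub>R f') /\<^sub>R h" if "h \<noteq> 0" for h
    using that by (simp add: algebra_simps)
  then have "\<forall>\<^sub>F h in at 0.
      norm (f (t + h) - f t - h *\<^sub>R f') / norm h = norm ((f (t + h) - f t) /\<^sub>R h - f')"
    by (auto simp: eventually_at_filter divide_inverse_commute)
  then have "((\<lambda>h. norm (f (t + h) - f t - h *\<^sub>R f') / norm h) \<longlongrightarrow> 0) (at 0) \<longleftrightarrow>
      ((\<lambda>h. (f (t + h) - f t) /\<^sub>R h) \<longlongrightarrow> f') (at 0)"
    by (subst tendsto_cong) (auto simp: tendsto_norm_zero_iff LIM_zero_iff)
  then show ?thesis
    by (simp add: has_vector_derivative_def has_derivative_at bounded_linear_scaleR_left)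
qed

lemma tendsto_integral_quotient_at_right_ae:
  fixes g :: "real \<Rightarrow> 'a::euclidean_space"
  assumes "\<And>a b. g integrable_on {a..b}"
  obtains N where "negligible N"
    "\<And>t. t \<notin> N \<Longrightarrow> ((\<lambda>h. integral {t..t + h} g /\<^sub>R h) \<longlongrightarrow> g t) (at_right 0)"
proof -
  obtain N where "negligible N" and N: "\<And>t e. t \<notin> N \<Longrightarrow> 0 < e \<Longrightarrow>
      \<exists>d>0. \<forall>h. 0 < h \<and> h < d \<longrightarrow>
        norm (integral (cbox t (t + h *\<^sub>R One)) g /\<^sub>R h ^ DIM(real) - g t) < e"
    using integrable_ccontinuous_explicit[of g] assms by auto
  moreover have "((\<lambda>h. integral {t..t + h} g /\<^sub>R h) \<longlongrightarrow> g t) (at_right 0)" if "t \<notin> N" for t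
    unfolding tendsto_iff eventually_at_right_field dist_norm
    using N[OF that] by simp (meson less_eq_real_def)
  ultimately show ?thesis using that by blast
qed

lemma tendsto_integral_quotient_at_left_ae:
  fixes g :: "real \<Rightarrow> 'a::euclidean_space"
  assumes g: "\<And>a b. g integrable_on {a..b}"
  obtains N where "negligible N"
    "\<And>t. t \<notin> N \<Longrightarrow> ((\<lambda>h. integral {t - h..t} g /\<^sub>R h) \<longlongrightarrow> g t) (at_right 0)"
proof -
  \<comment> \<open>qualified names: unqualified they denote the Lebesgue-integral versions\<close>
  have "(\<lambda>s. g (- s)) integrable_on {a..b}" for a b
    using Henstock_Kurzweil_Integration.integrable_reflect_real[where f = g and a = "- b" and b = "- a"]
      g
    by simp
  then obtain N where "negligible N" and N: "\<And>t. t \<notin> N \<Longrightarrow>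
      ((\<lambda>h. integral {t..t + h} (\<lambda>s. g (- s)) /\<^sub>R h) \<longlongrightarrow> g (- t)) (at_right 0)"
    using tendsto_integral_quotient_at_right_ae by blast
  have "negligible (uminus ` N)"
    by (rule negligible_differentiable_image_negligible[OF _ \<open>negligible N\<close>])
      (auto intro!: derivative_intros)
  moreover have "((\<lambda>h. integral {t - h..t} g /\<^sub>R h) \<longlongrightarrow> g t) (at_right 0)" if "t \<notin> uminus ` N" for t
  proof -
    have "- t \<notin> N"
      using that by (metis image_eqI minus_minus)
    moreover have "integral {- t..- t + h} (\<lambda>s. g (- s)) = integral {t - h..t} g" for h
      using Henstock_Kurzweil_Integration.integral_reflect_real[where f = g and a = "t - h" and b = t]
      by simp
    ultimately show ?thesis
      using N[of "- t"] by simp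
  qed
  ultimately show ?thesis
    using that by blast
qed

lemma integral_atLeastAtMost_diff:
  fixes g :: "real \<Rightarrow> 'a::banach"
  assumes "g integrable_on {a..b}" "a \<le> u" "u \<le> v" "v \<le> b"
  shows "integral {a..v} g - integral {a..u} g = integral {u..v} g"
  using Henstock_Kurzweil_Integration.integral_combine[where f = g and a = a and c = u and b = v]
    integrable_on_subinterval[OF assms(1), of a v] assms(2-4)
  by (simp add: algebra_simps)

lemma indefinite_integral_has_vector_derivative_ae:
  fixes g :: "real \<Rightarrow> 'a::euclidean_space"
  assumes g: "g integrable_on {a..b}"
  obtains N where "negligible N"
    "\<And>t. t \<in> {a<..<b} - N \<Longrightarrow> ((\<lambda>s. integral {a..s} g) has_vector_derivative g t) (at t)"
proof -
  define G where "G = (\<lambda>s. if s \<in> {a..b} then g s else 0)"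
  define F where "F s = integral {a..s} g" for s
  have G: "G integrable_on {u..v}" for u v
    using integrable_restrict_UNIV[of "{a..b}" g] g integrable_on_subinterval[of G UNIV]
    unfolding G_def by auto
  obtain N1 where "negligible N1" and N1: "\<And>t. t \<notin> N1 \<Longrightarrow>
      ((\<lambda>h. integral {t..t + h} G /\<^sub>R h) \<longlongrightarrow> G t) (at_right 0)"
    using tendsto_integral_quotient_at_right_ae[OF G] by blast
  obtain N2 where "negligible N2" and N2: "\<And>t. t \<notin> N2 \<Longrightarrow>
      ((\<lambda>h. integral {t - h..t} G /\<^sub>R h) \<longlongrightarrow> G t) (at_right 0)"
    using tendsto_integral_quotient_at_left_ae[OF G] by blast
  have F_diff: "F v - F u = integral {u..v} G" if "a \<le> u" "u \<le> v" "v \<le> b" for u v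
    unfolding F_def integral_atLeastAtMost_diff[OF g that]
    by (rule integral_cong) (use that in \<open>auto simp: G_def\<close>)
  show ?thesis
  proof (rule that)
    show "negligible (N1 \<union> N2)"
      using \<open>negligible N1\<close> \<open>negligible N2\<close> by simp
  next
    fix t assume t: "t \<in> {a<..<b} - (N1 \<union> N2)"
    then have G_t: "G t = g t"
      by (simp add: G_def)
    have small: "\<forall>\<^sub>F h in at_right 0. h \<in> {0<..<min (b - t) (t - a)}"
      using t by (intro eventually_at_right_real) auto
    have "\<forall>\<^sub>F h in at_right 0. integral {t..t + h} G /\<^sub>R h = (F (t + h) - F t) /\<^sub>R h"
      using small by eventually_elim (use t in \<open>simp add: F_diff\<close>)
    then have right: "((\<lambda>h. (F (t + h) - F t) /\<^sub>R h) \<longlongrightarrow> g t) (at_right 0)"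
      by (rule tendsto_cong[THEN iffD1]) (use N1[of t] t G_t in simp)
    have "\<forall>\<^sub>F h in at_right 0. integral {t - h..t} G /\<^sub>R h = (F (t + - h) - F t) /\<^sub>R (- h)"
      using small by eventually_elim (use t in \<open>simp add: F_diff[symmetric] scaleR_diff_right\<close>)
    then have "((\<lambda>h. (F (t + - h) - F t) /\<^sub>R (- h)) \<longlongrightarrow> g t) (at_right 0)"
      by (rule tendsto_cong[THEN iffD1]) (use N2[of t] t G_t in simp)
    then have left: "((\<lambda>h. (F (t + h) - F t) /\<^sub>R h) \<longlongrightarrow> g t) (at_left 0)"
      unfolding filterlim_at_left_to_right by simp
    show "((\<lambda>s. integral {a..s} g) has_vector_derivative g t) (at t)"
      unfolding has_vector_derivative_at_iff_quotient F_def[symmetric]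
      using left right by (rule filterlim_split_at)
  qed
qed

lemma W11_loop_vector_derivative:
  assumes "W11_loop c"
  shows W11_loop_vector_derivative_integrable:
      "integrable (lebesgue_on {0..2 * pi}) (\<lambda>t. vector_derivative c (at t))"
    and W11_loop_vector_derivative_integral_eq_0:
      "(\<integral>t. vector_derivative c (at t) \<partial>lebesgue_on {0..2 * pi}) = 0"
proof -
  obtain g where g: "g absolutely_integrable_on {0..2 * pi}"
    and c: "\<And>t. t \<in> {0..2 * pi} \<Longrightarrow> c t = c 0 + integral {0..t} g"
    and periodic: "c (0 + 2 * pi) = c 0"
    using assms unfolding W11_loop_def by blast
  obtain N where "negligible N" and N: "\<And>t. t \<in> {0<..<2 * pi} - N \<Longrightarrow>
      ((\<lambda>s. integral {0..s} g) has_vector_derivative g t) (at t)"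
    using indefinite_integral_has_vector_derivative_ae g
    unfolding absolutely_integrable_on_def by blast
  have spike: "negligible (N \<union> {0, 2 * pi})"
    using \<open>negligible N\<close> by (simp add: negligible_Un)
  have v_eq_g: "vector_derivative c (at t) = g t" if t: "t \<in> {0..2 * pi} - (N \<union> {0, 2 * pi})" for t
  proof (rule vector_derivative_at)
    have "((\<lambda>s. c 0 + integral {0..s} g) has_vector_derivative g t) (at t)"
      using has_vector_derivative_add[OF has_vector_derivative_const N] t by simp
    then show "(c has_vector_derivative g t) (at t)"
      by (rule has_vector_derivative_transform_within_open[of _ _ _ "{0<..<2 * pi}"])
        (use t in \<open>auto intro: c[symmetric]\<close>)
  qed
  have v_abs: "(\<lambda>t. vector_derivative c (at t)) absolutely_integrable_on {0..2 * pi}"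
    by (rule absolutely_integrable_spike[OF g spike v_eq_g])
  then show v_int: "integrable (lebesgue_on {0..2 * pi}) (\<lambda>t. vector_derivative c (at t))"
    by (rule absolutely_integrable_imp_integrable) simp
  have "(\<integral>t. vector_derivative c (at t) \<partial>lebesgue_on {0..2 * pi}) =
      integral {0..2 * pi} (\<lambda>t. vector_derivative c (at t))"
    by (rule lebesgue_integral_eq_integral[OF v_int]) simp
  also have "\<dots> = integral {0..2 * pi} g"
    by (rule integral_spike[OF spike v_eq_g, symmetric])
  also have "\<dots> = 0"
    using c[of "2 * pi"] periodic by simp
  finally show "(\<integral>t. vector_derivative c (at t) \<partial>lebesgue_on {0..2 * pi}) = 0" .
qed

lemma closed_supp:
  fixes M :: "complex measure"
  assumes "sets M = sets borel"
  shows "closed (supp M)"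
  unfolding closed_def open_contains_ball
proof
  fix p assume "p \<in> - supp M"
  then obtain e where e: "e > 0" "emeasure M (ball p e) = 0"
    by (auto simp: supp_def)
  have "q \<notin> supp M" if q: "q \<in> ball p e" for q
  proof -
    have "ball q (e - dist p q) \<subseteq> ball p e"
      by (rule ball_subset_ball_iff[THEN iffD2]) (auto simp: dist_commute)
    then have "emeasure M (ball q (e - dist p q)) = 0"
      using emeasure_eq_0[OF _ e(2)] assms by simp
    moreover have "e - dist p q > 0"
      using q by simp
    ultimately show ?thesis
      unfolding supp_def by blast
  qed
  then show "\<exists>e>0. ball p e \<subseteq> - supp M"
    using e by blast
qed

lemma emeasure_eq_0_if_disjoint_supp:
  fixes M :: "complex measure"
  assumes sets: "sets M = sets borel" and U: "U \<inter> supp M = {}"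
  shows "emeasure M U = 0"
proof -
  have "\<exists>e>0. emeasure M (ball p e) = 0" if "p \<in> U" for p
    using U that unfolding supp_def by blast
  then obtain E where E: "\<And>p. p \<in> U \<Longrightarrow> E p > 0" "\<And>p. p \<in> U \<Longrightarrow> emeasure M (ball p (E p)) = 0"
    by metis
  obtain F where F: "F \<subseteq> (\<lambda>p. ball p (E p)) ` U" "countable F" "\<Union>F = (\<Union>p\<in>U. ball p (E p))"
    using Lindelof[of "(\<lambda>p. ball p (E p)) ` U"] by auto
  have "ball p (E p) \<in> null_sets M" if "p \<in> U" for p
    using E(2)[OF that] sets by (simp add: null_sets_def)
  then have "B \<in> null_sets M" if "B \<in> F" for B
    using that F(1) by blast
  then have "(\<Union>B\<in>F. B) \<in> null_sets M"
    using F(2) by (intro null_sets_UN')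
  moreover have "U \<subseteq> (\<Union>B\<in>F. B)"
    using F(3) E(1) by force
  ultimately show ?thesis
    using emeasure_eq_0 by blast
qed

lemma supp_two_dirac:
  fixes M :: "complex measure"
  assumes M: "is_two_dirac M r x" and "r > 0"
  shows "supp M = {x, - x}"
proof -
  have ball: "emeasure M (ball p e) =
      ennreal r * indicator (ball p e) x + ennreal r * indicator (ball p e) (- x)" for p e
    using M unfolding is_two_dirac_def by simp
  have "p \<notin> supp M" if "p \<notin> {x, - x}" for p
  proof -
    have "x \<notin> ball p (min (dist p x) (dist p (- x)))" "- x \<notin> ball p (min (dist p x) (dist p (- x)))"
      by auto
    then show ?thesis
      using that unfolding supp_def ball by (auto intro!: exI[of _ "min (dist p x) (dist p (- x))"])
  qed
  moreover have "emeasure M (ball p e) \<noteq> 0" if "p \<in> {x, - x}" "e > 0" for p e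
    using that \<open>r > 0\<close> unfolding ball by (auto simp: indicator_def)
  ultimately show ?thesis
    unfolding supp_def by blast
qed

lemma sets_length_measure [simp]: "sets (length_measure c) = sets borel"
  by (simp add: length_measure_def)

lemma emeasure_length_measure:
  assumes v: "(\<lambda>t. vector_derivative c (at t)) \<in> borel_measurable (lebesgue_on {0..2 * pi})"
    and A: "A \<in> sets borel"
  shows "emeasure (length_measure c) A =
    (\<integral>\<^sup>+t. ennreal (norm (vector_derivative c (at t))) *
        indicator A (sgn (vector_derivative c (at t))) \<partial>lebesgue_on {0..2 * pi})"
proof -
  let ?L = "lebesgue_on {0..2 * pi}" and ?v = "\<lambda>t. vector_derivative c (at t)"
  have sgn_L: "(\<lambda>t. sgn (?v t)) \<in> borel_measurable ?L"
    using v by measurable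
  have norm_meas: "(\<lambda>t. ennreal (norm (?v t))) \<in> borel_measurable ?L"
    using v by measurable
  from sgn_L have sgn_meas: "(\<lambda>t. sgn (?v t)) \<in> density ?L (\<lambda>t. ennreal (norm (?v t))) \<rightarrow>\<^sub>M borel"
    by (simp add: measurable_cong_sets[OF sets_density refl])
  have "emeasure (length_measure c) A =
      emeasure (density ?L (\<lambda>t. ennreal (norm (?v t)))) ((\<lambda>t. sgn (?v t)) -` A \<inter> {0..2 * pi})"
    unfolding length_measure_def by (simp add: emeasure_distr[OF sgn_meas A])
  also have "\<dots> =
      (\<integral>\<^sup>+t. ennreal (norm (?v t)) * indicator ((\<lambda>t. sgn (?v t)) -` A \<inter> {0..2 * pi}) t \<partial>?L)"
    by (rule emeasure_density[OF norm_meas]) (use measurable_sets[OF sgn_L A] in simp)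
  also have "\<dots> = (\<integral>\<^sup>+t. ennreal (norm (?v t)) * indicator A (sgn (?v t)) \<partial>?L)"
    by (rule nn_integral_cong) (auto simp: indicator_def)
  finally show ?thesis .
qed

lemma supp_length_measure_subset_sphere:
  assumes v: "(\<lambda>t. vector_derivative c (at t)) \<in> borel_measurable (lebesgue_on {0..2 * pi})"
  shows "supp (length_measure c) \<subseteq> sphere 0 1"
proof
  fix p assume p: "p \<in> supp (length_measure c)"
  show "p \<in> sphere 0 1"
  proof (rule ccontr)
    assume "p \<notin> sphere 0 1"
    moreover have "open (- sphere (0::complex) 1)"
      by (simp add: open_Compl)
    ultimately obtain e where "e > 0" and ball: "ball p e \<subseteq> - sphere 0 1"
      by (meson ComplI open_contains_ball_eq)
    have "emeasure (length_measure c) (- sphere 0 1) =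
        (\<integral>\<^sup>+t. ennreal (norm (vector_derivative c (at t))) *
           indicator (- sphere 0 1) (sgn (vector_derivative c (at t))) \<partial>lebesgue_on {0..2 * pi})"
      by (intro emeasure_length_measure[OF v] borel_open open_Compl closed_sphere)
    also have "\<dots> = (\<integral>\<^sup>+t. 0 \<partial>lebesgue_on {0..2 * pi})"
      by (rule nn_integral_cong) (simp add: norm_sgn indicator_def)
    finally have "emeasure (length_measure c) (- sphere 0 1) = 0"
      by simp
    then have "emeasure (length_measure c) (ball p e) = 0"
      by (rule emeasure_eq_0[rotated]) (use ball in auto)
    then show False
      using p \<open>e > 0\<close> unfolding supp_def by blast
  qed
qed

lemma AE_sgn_vector_derivative_notin_null_set:
  assumes v: "(\<lambda>t. vector_derivative c (at t)) \<in> borel_measurable (lebesgue_on {0..2 * pi})"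
    and A: "A \<in> sets borel" and null: "emeasure (length_measure c) A = 0"
  shows "AE t in lebesgue_on {0..2 * pi}.
    vector_derivative c (at t) \<noteq> 0 \<longrightarrow> sgn (vector_derivative c (at t)) \<notin> A"
proof -
  let ?L = "lebesgue_on {0..2 * pi}" and ?v = "\<lambda>t. vector_derivative c (at t)"
  have sgn_meas: "(\<lambda>t. sgn (?v t)) \<in> borel_measurable ?L"
    using v by measurable
  have "(\<lambda>t. indicator A (sgn (?v t)) :: ennreal) \<in> borel_measurable ?L"
    using measurable_compose[OF sgn_meas borel_measurable_indicator[OF A]] by (simp add: o_def)
  then have integrand_meas:
      "(\<lambda>t. ennreal (norm (?v t)) * indicator A (sgn (?v t))) \<in> borel_measurable ?L"
    using v by measurable
  have "(\<integral>\<^sup>+t. ennreal (norm (?v t)) * indicator A (sgn (?v t)) \<partial>?L) = 0"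
    using null by (simp only: emeasure_length_measure[OF v A])
  then have "AE t in ?L. ennreal (norm (?v t)) * indicator A (sgn (?v t)) = 0"
    by (simp only: nn_integral_0_iff_AE[OF integrand_meas])
  then show ?thesis
    by eventually_elim (auto simp: indicator_def)
qed

lemma emeasure_length_measure_halfplane_neq_0:
  assumes W: "W11_loop c"
    and nonzero: "AE t in lebesgue_on {0..2 * pi}. vector_derivative c (at t) \<noteq> 0"
  shows "emeasure (length_measure c) {y. 0 \<le> x \<bullet> y} \<noteq> 0"
proof
  let ?L = "lebesgue_on {0..2 * pi}" and ?v = "\<lambda>t. vector_derivative c (at t)"
  assume null: "emeasure (length_measure c) {y. 0 \<le> x \<bullet> y} = 0"
  have v_int: "integrable ?L ?v"
    by (rule W11_loop_vector_derivative_integrable[OF W])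
  then have v_meas: "?v \<in> borel_measurable ?L"
    by (rule borel_measurable_integrable)
  have H_borel: "{y. 0 \<le> x \<bullet> y} \<in> sets borel"
    by (intro borel_closed closed_Collect_le continuous_intros)
  from nonzero AE_sgn_vector_derivative_notin_null_set[OF v_meas H_borel null]
  have neg: "AE t in ?L. x \<bullet> ?v t < 0"
  proof eventually_elim
    case (elim t)
    then have "\<not> 0 \<le> x \<bullet> sgn (?v t)"
      by simp
    moreover have "x \<bullet> sgn (?v t) = (x \<bullet> ?v t) / norm (?v t)"
      by (simp add: sgn_div_norm inner_scaleR_right divide_inverse mult.commute)
    ultimately show ?case
      using elim(1) by (auto simp: not_le divide_less_0_iff)
  qed
  have neg_int: "integrable ?L (\<lambda>t. - (x \<bullet> ?v t))"
    using v_int by simp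
  have "(\<integral>t. - (x \<bullet> ?v t) \<partial>?L) = 0"
    using v_int W11_loop_vector_derivative_integral_eq_0[OF W] by simp
  moreover have "AE t in ?L. 0 \<le> - (x \<bullet> ?v t)"
    using neg by eventually_elim simp
  ultimately have "AE t in ?L. - (x \<bullet> ?v t) = 0"
    using integral_nonneg_eq_0_iff_AE[OF neg_int] by blast
  with neg have "AE t in ?L. False"
    by eventually_elim simp
  then have "emeasure ?L (space ?L) = 0"
    using ae_filter_eq_bot_iff eventually_False by metis
  then show False
    by (simp add: emeasure_restrict_space)
qed

lemma unit_complex_orthogonal_iff:
  fixes x y :: complex
  assumes "norm x = 1" "norm y = 1"
  shows "x \<bullet> y = 0 \<longleftrightarrow> y = \<i> * x \<or> y = - (\<i> * x)"
proof
  assume orth: "x \<bullet> y = 0"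
  define l where "l = Re x * Im y - Im x * Re y"
  have orth': "Re x * Re y + Im x * Im y = 0"
    using orth by (simp add: inner_complex_def)
  have nx: "(Re x)\<^sup>2 + (Im x)\<^sup>2 = 1" and ny: "(Re y)\<^sup>2 + (Im y)\<^sup>2 = 1"
    using assms by (simp_all add: cmod_def)
  have Re_y: "Re y = - Im x * l" and Im_y: "Im y = Re x * l"
    unfolding l_def using orth' nx by algebra+
  have "l\<^sup>2 = 1"
    using Re_y Im_y nx ny by algebra
  then have "l = 1 \<or> l = -1"
    by (simp add: power2_eq_1_iff)
  then show "y = \<i> * x \<or> y = - (\<i> * x)"
    using Re_y Im_y by (auto simp: complex_eq_iff)
qed (auto simp: inner_complex_def)

lemma supp_length_measure_meets_open_halfplane:
  assumes c: "convex_loop c" and x: "norm x = 1"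
    and orth: "{\<i> * x, - (\<i> * x)} \<inter> supp (length_measure c) = {}"
  shows "\<exists>y\<in>supp (length_measure c). 0 < x \<bullet> y"
proof -
  have W: "W11_loop c"
    and nonzero: "AE t in lebesgue_on {0..2 * pi}. vector_derivative c (at t) \<noteq> 0"
    using c by (auto simp: convex_loop_def)
  have "{y. 0 \<le> x \<bullet> y} \<inter> supp (length_measure c) \<noteq> {}"
    using emeasure_length_measure_halfplane_neq_0[OF W nonzero]
      emeasure_eq_0_if_disjoint_supp[OF sets_length_measure] by blast
  then obtain y where y: "y \<in> supp (length_measure c)" "0 \<le> x \<bullet> y"
    by blast
  have "norm y = 1"
    using y(1) supp_length_measure_subset_sphere[OF
        borel_measurable_integrable[OF W11_loop_vector_derivative_integrable[OF W]]] by auto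
  then have "x \<bullet> y \<noteq> 0"
    using unit_complex_orthogonal_iff[OF x] orth y(1) by blast
  then show ?thesis
    using y by force
qed

lemma s1dist_commute: "s1dist x y = s1dist y x"
  by (simp add: s1dist_def inner_commute)

lemma ell_s1dist:
  fixes a b :: complex
  assumes "norm a = 1" "norm b = 1"
  shows "ell (s1dist a b) = (if 0 < a \<bullet> b then ereal (- ln ((a \<bullet> b)\<^sup>2)) else \<infinity>)"
proof -
  have bounds: "-1 \<le> a \<bullet> b" "a \<bullet> b \<le> 1"
    using Cauchy_Schwarz_ineq2[of a b] assms by (simp_all add: abs_le_iff)
  show ?thesis
  proof (cases "0 < a \<bullet> b")
    case True
    have "arccos (a \<bullet> b) < arccos 0"
      by (rule arccos_less_arccos) (use True bounds in auto)
    then show ?thesis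
      using True bounds by (simp add: ell_def s1dist_def cos_arccos)
  next
    case False
    have "arccos 0 \<le> arccos (a \<bullet> b)"
      by (rule arccos_le_arccos) (use False bounds in auto)
    then show ?thesis
      using False by (simp add: ell_def s1dist_def)
  qed
qed

lemma INF_antipodal_ell_s1dist:
  fixes x y :: complex
  assumes x: "norm x = 1" and y: "norm y = 1"
  shows "(INF a\<in>{x, - x}. ell (s1dist a y)) = (if x \<bullet> y = 0 then \<infinity> else ereal (- ln ((x \<bullet> y)\<^sup>2)))"
proof -
  have "norm (- x) = 1"
    using x by simp
  then show ?thesis
    using ell_s1dist[OF x y] ell_s1dist[of "- x" y] y by (auto simp: min_def)
qed

lemma SUP_INF_antipodal_ell_less_infinity_iff:
  fixes S :: "complex set"
  assumes S: "S \<subseteq> sphere 0 1" "closed S" and x: "norm x = 1"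
  shows "(SUP y\<in>S. INF a\<in>{x, - x}. ell (s1dist a y)) < \<infinity> \<longleftrightarrow> {\<i> * x, - (\<i> * x)} \<inter> S = {}"
proof
  assume finite: "(SUP y\<in>S. INF a\<in>{x, - x}. ell (s1dist a y)) < \<infinity>"
  have "y \<notin> S" if "x \<bullet> y = 0" "norm y = 1" for y
  proof
    assume "y \<in> S"
    then have "(INF a\<in>{x, - x}. ell (s1dist a y)) \<le> (SUP y\<in>S. INF a\<in>{x, - x}. ell (s1dist a y))"
      by (rule SUP_upper)
    then show False
      using finite INF_antipodal_ell_s1dist[OF x \<open>norm y = 1\<close>] \<open>x \<bullet> y = 0\<close> by simp
  qed
  then show "{\<i> * x, - (\<i> * x)} \<inter> S = {}"
    using unit_complex_orthogonal_iff[OF x] x by (auto simp: norm_mult)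
next
  assume orth: "{\<i> * x, - (\<i> * x)} \<inter> S = {}"
  show "(SUP y\<in>S. INF a\<in>{x, - x}. ell (s1dist a y)) < \<infinity>"
  proof (cases "S = {}")
    case False
    have "compact S"
      using S by (meson bounded_subset bounded_sphere compact_eq_bounded_closed)
    moreover have "continuous_on S (\<lambda>y. \<bar>x \<bullet> y\<bar>)"
      by (intro continuous_intros)
    ultimately obtain y0 where y0: "y0 \<in> S" and min: "\<And>y. y \<in> S \<Longrightarrow> \<bar>x \<bullet> y0\<bar> \<le> \<bar>x \<bullet> y\<bar>"
      using continuous_attains_inf[OF _ False] by blast
    have "x \<bullet> y0 \<noteq> 0"
      using unit_complex_orthogonal_iff[OF x] y0 S(1) orth by auto
    have "(INF a\<in>{x, - x}. ell (s1dist a y)) \<le> ereal (- ln ((x \<bullet> y0)\<^sup>2))" if "y \<in> S" for y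
    proof -
      have "(x \<bullet> y0)\<^sup>2 \<le> (x \<bullet> y)\<^sup>2"
        using min[OF that] by (simp add: abs_le_square_iff)
      moreover have "x \<bullet> y \<noteq> 0"
        using min[OF that] \<open>x \<bullet> y0 \<noteq> 0\<close> by auto
      ultimately show ?thesis
        using INF_antipodal_ell_s1dist[OF x] that S(1) \<open>x \<bullet> y0 \<noteq> 0\<close> by auto
    qed
    then have "(SUP y\<in>S. INF a\<in>{x, - x}. ell (s1dist a y)) \<le> ereal (- ln ((x \<bullet> y0)\<^sup>2))"
      by (rule SUP_least)
    then show ?thesis
      by (rule order.strict_trans1) simp
  qed (simp add: bot_ereal_def)
qed

lemma INF_ell_s1dist_less_infinity:
  fixes S :: "complex set"
  assumes "S \<subseteq> sphere 0 1" "norm a = 1" "y \<in> S" "0 < a \<bullet> y"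
  shows "(INF y\<in>S. ell (s1dist a y)) < \<infinity>"
proof -
  have "(INF y\<in>S. ell (s1dist a y)) \<le> ell (s1dist a y)"
    using assms(3) by (rule INF_lower)
  also have "\<dots> = ereal (- ln ((a \<bullet> y)\<^sup>2))"
    using ell_s1dist[OF assms(2)] assms by auto
  finally show ?thesis
    by (rule order.strict_trans1) simp
qed

lemma admissible_commute: "admissible M N \<longleftrightarrow> admissible N M"
  unfolding admissible_def by (simp add: s1dist_commute max.commute)

lemma admissible_two_dirac_length_measure_iff:
  fixes M :: "complex measure"
  assumes c: "convex_loop c" and M: "supp M = {x, - x}" and x: "norm x = 1"
  shows "admissible M (length_measure c) \<longleftrightarrow> {\<i> * x, - (\<i> * x)} \<inter> supp (length_measure c) = {}"
    (is "_ \<longleftrightarrow> {\<i> * x, - (\<i> * x)} \<inter> ?S = {}")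
proof -
  have W: "W11_loop c"
    using c by (simp add: convex_loop_def)
  have S: "?S \<subseteq> sphere 0 1" "closed ?S"
    using supp_length_measure_subset_sphere[OF
        borel_measurable_integrable[OF W11_loop_vector_derivative_integrable[OF W]]]
      closed_supp[OF sets_length_measure] by auto
  have "(SUP a\<in>{x, - x}. INF y\<in>?S. ell (s1dist a y)) < \<infinity>"
    if orth: "{\<i> * x, - (\<i> * x)} \<inter> ?S = {}"
  proof -
    have "norm (- x) = 1" "{\<i> * - x, - (\<i> * - x)} \<inter> ?S = {}"
      using x orth by auto
    then have INF_finite: "(INF y\<in>?S. ell (s1dist a y)) < \<infinity>" if "a \<in> {x, - x}" for a
      using that supp_length_measure_meets_open_halfplane[OF c] x orth
        INF_ell_s1dist_less_infinity[OF S(1)] by blast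
    show ?thesis
      using INF_finite[of x] INF_finite[of "- x"] by (simp add: sup_max) (simp add: max_def)
  qed
  moreover have "admissible M (length_measure c) \<longleftrightarrow>
      (SUP a\<in>{x, - x}. INF y\<in>?S. ell (s1dist a y)) < \<infinity> \<and>
      (SUP y\<in>?S. INF a\<in>{x, - x}. ell (s1dist a y)) < \<infinity>"
    unfolding admissible_def M by (simp only: max_less_iff_conj)
  ultimately show ?thesis
    using SUP_INF_antipodal_ell_less_infinity_iff[OF S x] by blast
qed

theorem lemma3p2:
  fixes c :: "nat \<Rightarrow> real \<Rightarrow> complex" and j i :: nat and r :: real and x :: complex
  assumes "convex_loop (c 0)" and "convex_loop (c 1)"
    and "j \<in> {0, 1}" and "i = 1 - j"
    and "r > 0" and "x \<in> sphere 0 1"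
    and "is_two_dirac (length_measure (c j)) r x"
  shows "admissible (length_measure (c 0)) (length_measure (c 1)) \<longleftrightarrow>
           {\<i> * x, - (\<i> * x)} \<inter> supp (length_measure (c i)) = {}"
proof -
  have "supp (length_measure (c j)) = {x, - x}"
    using supp_two_dirac assms(5,7) by blast
  moreover have "convex_loop (c i)"
    using assms(1-4) by auto
  ultimately have "admissible (length_measure (c j)) (length_measure (c i)) \<longleftrightarrow>
      {\<i> * x, - (\<i> * x)} \<inter> supp (length_measure (c i)) = {}"
    using admissible_two_dirac_length_measure_iff assms(6) by simp
  moreover have "admissible (length_measure (c 0)) (length_measure (c 1)) \<longleftrightarrow>
      admissible (length_measure (c j)) (length_measure (c i))"
    using assms(3,4) admissible_commute by auto
  ultimately show ?thesis
    by simp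
qed

end
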